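(* For $n\ge1$ let $\mathfrak C^{(0)}_{-1/2}(q;t_1,\dots,t_n):=\mathrm{tr}_{\mathcal F^{-1/2}}\big(q^{L_0}\mathsf C(t_1)\cdots\mathsf C(t_n)\big)$. Then $$\mathfrak C^{(0)}_{-1/2}(q;qt_1,t_2,\dots,t_n)=\sum_{s=0}^{n-1}\sum_{1<i_1<\cdots<i_s\le n}\sum_{\epsilon_{i_1},\dots,\epsilon_{i_s}\in\{\pm1\}}(-1)^{s+\#\epsilon}\,\mathfrak C^{(0)}_{-1/2}\big(q;\,t_1t_{i_1}^{\epsilon_{i_1}}\cdots t_{i_s}^{\epsilon_{i_s}},\,(t_j)_{j\notin\{1,i_1,\dots,i_s\}}\big),$$ where $\#\epsilon$ is the number of $a$ with $\epsilon_{i_a}=-1$, and on the right the first argument is followed by the remaining $t_j$ in increasing order of $j$. Both sides are power series in $q^{1/2}$ with coefficients rational in the $t_j^{1/2}$.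
   Context: $\mathcal F^{-1/2}$ is the Fock space of a bosonic field with modes $\chi_r$, $r\in\frac12+\mathbb Z$, $[\chi_r,\chi_s]=(-1)^{r+1/2}\delta_{r+s,0}$, $\chi_r|0\rangle=0$ for $r>0$; it has basis $v_\lambda=\chi_{-\lambda_1+1/2}\chi_{-\lambda_2+1/2}\cdots|0\rangle$ over partitions $\lambda$. $L_0v_\lambda=(|\lambda|-\ell(\lambda)/2)v_\lambda$, and $\mathsf C(t)=\sum_{r\in\frac12+\mathbb Z}(-1)^{r+1/2}t^r\chi_{-r}\chi_r$ acts diagonally by $\mathsf C(t)v_\lambda=\big(\sum_{i=1}^{\ell(\lambda)}(t^{\lambda_i-1/2}-t^{-\lambda_i+1/2})+\frac{1}{t^{-1/2}-t^{1/2}}\big)v_\lambda$. *)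

theory Defs
  imports "HOL-Analysis.Analysis" "HOL-Library.FuncSet"
begin

text \<open>We work analytically over the complex numbers.
  The variable p stands for q^(1/2), and a list xs of complex numbers stands
  for the square roots (t_1^(1/2), ..., t_n^(1/2)); thus t^(k - 1/2) = s^(2k-1)
  where s = t^(1/2).\<close>

definition partitions :: "nat list set" where
  "partitions = {lam. sorted_wrt (\<ge>) lam \<and> 0 \<notin> set lam}"

text \<open>Eigenvalue of C(t) on v_lam, where s = t^(1/2).\<close>
definition C_eig :: "complex \<Rightarrow> nat list \<Rightarrow> complex" where
  "C_eig s lam =
     sum_list (map (\<lambda>k. s ^ (2*k - 1) - inverse s ^ (2*k - 1)) lam)
     + 1 / (inverse s - s)"

text \<open>Eigenvalue of q^(L_0) on v_lam, where p = q^(1/2): q^(|lam| - l(lam)/2).\<close>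
definition L0_weight :: "complex \<Rightarrow> nat list \<Rightarrow> complex" where
  "L0_weight p lam = p ^ (2 * sum_list lam - length lam)"

text \<open>The trace of q^(L_0) C(t_1) ... C(t_n) over F^(-1/2), computed in the
  eigenbasis v_lam.\<close>
definition trace_C :: "complex \<Rightarrow> complex list \<Rightarrow> complex" where
  "trace_C p xs = (\<Sum>\<^sub>\<infinity>lam\<in>partitions.
      L0_weight p lam * prod_list (map (\<lambda>s. C_eig s lam) xs))"

text \<open>Domain of absolute convergence of the trace (away from poles):
  q^(1/2) nonzero, each t_k nonzero and different from 1, and
  |q * prod_(k in K) t_k^(+-1)| < 1 for every subset K of the arguments and
  every choice of signs.\<close>
definition conv_domain :: "complex \<Rightarrow> complex list \<Rightarrow> bool" where
  "conv_domain p xs \<longleftrightarrow> p \<noteq> 0 \<and> (\<forall>s\<in>set xs. s \<noteq> 0 \<and> s\<^sup>2 \<noteq> 1) \<and>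
     (\<forall>K \<subseteq> {..<length xs}. \<forall>e::nat \<Rightarrow> bool.
        norm (p * (\<Prod>k\<in>K. if e k then xs ! k else inverse (xs ! k))) < 1)"

text \<open>Indices are 0-based: ss ! 0 = t_1^(1/2); e i = True means eps_i = +1.\<close>
definition rhs_args :: "complex list \<Rightarrow> nat set \<Rightarrow> (nat \<Rightarrow> bool) \<Rightarrow> complex list" where
  "rhs_args ss I e =
     (hd ss * (\<Prod>i\<in>I. if e i then ss ! i else inverse (ss ! i)))
     # map (nth ss) (filter (\<lambda>j. j \<notin> I) [1..<length ss])"

end

theory Submission
  imports Defs "HOL-Library.Multiset"
begin

text \<open>
  For \<open>|t| < 1\<close> the vacuum term is the series \<open>\<Sum>\<^sub>k\<^sub>\<ge>\<^sub>1 t^(k-1/2)\<close>, so the first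
  eigenvalue becomes a series over part sizes \<open>k\<close>; re-indexing the negative terms by
  adding one part \<open>k\<close> to a partition \<open>N\<close> turns the trace into an absolutely convergent
  double series over pairs \<open>(N, k)\<close> (lemma \<open>trace_shifted_expansion\<close>).  This applies
  to the left-hand side, whose first argument is \<open>q t\<^sub>1\<close>, and, since \<open>C(t\<^sup>-\<^sup>1) = -C(t)\<close>,
  to every right-hand trace with its first argument inverted.  Both sides thus become
  double series over the same index set, and the theorem reduces to a finite identity
  for each \<open>(N, k)\<close>: the expansion of a product of binomials over subsets and sign
  choices (lemma \<open>shift_term_sign_identity\<close>).
\<close>

section \<open>Partitions as multisets\<close>

text \<open>A partition is the same thing as a finite multiset of positive integers (its
  parts).  Multisets are better suited to the manipulations below, e.g. adding a
  single part \<open>k\<close> to a partition \<open>N\<close> is simply \<open>N + {#k#}\<close>.\<close>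

definition pos_msets :: "nat multiset set" where
  "pos_msets = {M. 0 \<notin># M}"

definition weight :: "complex \<Rightarrow> nat multiset \<Rightarrow> complex" where
  "weight p M = p ^ (2 * sum_mset M - size M)"

definition mode :: "complex \<Rightarrow> nat \<Rightarrow> complex" where
  "mode s k = s ^ (2*k - 1) - inverse s ^ (2*k - 1)"

definition vac :: "complex \<Rightarrow> complex" where
  "vac s = 1 / (inverse s - s)"

definition eig :: "complex \<Rightarrow> nat multiset \<Rightarrow> complex" where
  "eig s M = (\<Sum>k\<in>#M. mode s k) + vac s"

definition eigs :: "complex list \<Rightarrow> nat multiset \<Rightarrow> complex" where
  "eigs ys M = prod_list (map (\<lambda>s. eig s M) ys)"

definition tr :: "complex \<Rightarrow> complex list \<Rightarrow> complex" where
  "tr p xs = (\<Sum>\<^sub>\<infinity>M\<in>pos_msets. weight p M * eigs xs M)"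

text \<open>Sorting in decreasing order identifies partitions with positive multisets.\<close>
lemma bij_betw_mset_partitions: "bij_betw mset partitions pos_msets"
proof (rule bij_betw_imageI)
  show "inj_on mset partitions"
  proof (rule inj_onI)
    fix xs ys assume "xs \<in> partitions" "ys \<in> partitions" "mset xs = mset ys"
    hence "sorted (rev xs)" "sorted (rev ys)" "mset (rev xs) = mset (rev ys)"
      by (auto simp: partitions_def sorted_wrt_rev)
    hence "rev xs = rev ys" by (metis properties_for_sort)
    thus "xs = ys" by simp
  qed
  have "M \<in> mset ` partitions" if "M \<in> pos_msets" for M
  proof -
    have "rev (sorted_list_of_multiset M) \<in> partitions"
      using that by (auto simp: partitions_def pos_msets_def sorted_wrt_rev)
    thus ?thesis by (metis image_eqI mset_rev mset_sorted_list_of_multiset)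
  qed
  thus "mset ` partitions = pos_msets" by (auto simp: partitions_def pos_msets_def)
qed

lemma C_eig_eq_eig: "C_eig s lam = eig s (mset lam)"
  unfolding C_eig_def eig_def vac_def mode_def by (simp flip: mset_map add: sum_mset_sum_list)

lemma trace_C_eq_tr: "trace_C p xs = tr p xs"
proof -
  have "trace_C p xs = (\<Sum>\<^sub>\<infinity>lam\<in>partitions. weight p (mset lam) * eigs xs (mset lam))"
    unfolding trace_C_def
    by (intro infsum_cong) (simp add: L0_weight_def weight_def eigs_def C_eig_eq_eig sum_mset_sum_list)
  also have "\<dots> = tr p xs"
    unfolding tr_def by (rule infsum_reindex_bij_betw[OF bij_betw_mset_partitions])
  finally show ?thesis .
qed

lemma size_le_sum_mset: "0 \<notin># M \<Longrightarrow> size M \<le> sum_mset M"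
  by (induction M) auto

lemma prod_mset_odd_powers:
  fixes r :: "'a::comm_monoid_mult"
  assumes "0 \<notin># M"
  shows "(\<Prod>k\<in>#M. r ^ (2*k - 1)) = r ^ (2 * sum_mset M - size M)"
  using assms
proof (induction M)
  case (add k M)
  have "size M \<le> sum_mset M" "0 < k" using add.prems by (auto intro: size_le_sum_mset)
  hence "2*k - 1 + (2 * sum_mset M - size M) = 2 * sum_mset (add_mset k M) - size (add_mset k M)"
    by simp
  thus ?case using add by (simp add: power_add[symmetric])
qed simp

lemma weight_add_part:
  assumes "0 \<notin># N" "0 < k"
  shows "weight p (N + {#k#}) = p ^ (2*k - 1) * weight p N"
  using prod_mset_odd_powers[of "N + {#k#}" p] prod_mset_odd_powers[of N p] assms
  by (simp add: weight_def)

lemma eig_add_part: "eig s (N + {#k#}) = eig s N + mode s k"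
  by (simp add: eig_def)

lemma eig_inverse: "eig (inverse s) M = - eig s M"
proof -
  have "mode (inverse s) = (\<lambda>k. - mode s k)" by (simp add: mode_def fun_eq_iff)
  moreover have "vac (inverse s) = - vac s" by (simp add: vac_def divide_simps)
  moreover have "(\<Sum>k\<in>#M. - mode s k) = - (\<Sum>k\<in>#M. mode s k)"
    by (induction M) auto
  ultimately show ?thesis by (simp add: eig_def)
qed

lemma eigs_inverse_hd: "eigs (inverse s # ys) M = - eigs (s # ys) M"
  by (simp add: eigs_def eig_inverse)

section \<open>Estimates for the eigenvalues\<close>

text \<open>The larger of \<open>|z|\<close> and \<open>|z|\<^sup>-\<^sup>1\<close>: it dominates both \<open>|z^m|\<close> and \<open>|z^-m|\<close>.\<close>
definition maxnorm :: "complex \<Rightarrow> real" where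
  "maxnorm z = max (norm z) (inverse (norm z))"

lemma maxnorm_ge_1: "z \<noteq> 0 \<Longrightarrow> 1 \<le> maxnorm z"
  unfolding maxnorm_def by (cases "norm z \<le> 1") (auto simp: one_le_inverse max.coboundedI2)

lemma maxnorm_nonneg: "0 \<le> maxnorm z"
  by (simp add: maxnorm_def le_max_iff_disj)

lemma maxnorm_inverse: "maxnorm (inverse z) = maxnorm z"
  by (simp add: maxnorm_def norm_inverse max.commute)

lemma norm_le_maxnorm: "norm z \<le> maxnorm z"
  and norm_inverse_le_maxnorm: "norm (inverse z) \<le> maxnorm z"
  by (auto simp: maxnorm_def norm_inverse)

text \<open>Real majorant of \<open>\<Sum>\<^sub>k\<^sub>\<in>\<^sub>M mode s k\<close>.\<close>
definition odd_pow_sum :: "real \<Rightarrow> nat multiset \<Rightarrow> real" where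
  "odd_pow_sum R M = (\<Sum>k\<in>#M. R ^ (2*k - 1))"

lemma odd_pow_sum_nonneg: "0 \<le> R \<Longrightarrow> 0 \<le> odd_pow_sum R M"
  unfolding odd_pow_sum_def by (induction M) auto

lemma odd_pow_sum_one: "odd_pow_sum 1 M = of_nat (size M)"
  unfolding odd_pow_sum_def by (induction M) auto

lemma norm_mode: "norm (mode s k) \<le> 2 * maxnorm s ^ (2*k - 1)"
proof -
  have "norm (mode s k) \<le> norm s ^ (2*k - 1) + norm (inverse s) ^ (2*k - 1)"
    unfolding mode_def by (metis norm_power norm_triangle_ineq4)
  also have "\<dots> \<le> maxnorm s ^ (2*k - 1) + maxnorm s ^ (2*k - 1)"
    by (intro add_mono power_mono norm_le_maxnorm norm_inverse_le_maxnorm) auto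
  finally show ?thesis by simp
qed

lemma norm_eig:
  assumes "norm (vac s) \<le> D"
  shows "norm (eig s M) \<le> 2 * (odd_pow_sum (maxnorm s) M + D)"
proof -
  have "norm (\<Sum>k\<in>#M. mode s k) \<le> (\<Sum>k\<in>#M. 2 * maxnorm s ^ (2*k - 1))"
  proof (induction M)
    case (add k M)
    thus ?case using norm_mode[of s k] by (simp add: norm_triangle_le)
  qed simp
  also have "\<dots> = 2 * odd_pow_sum (maxnorm s) M"
    by (simp add: odd_pow_sum_def sum_mset_distrib_left)
  finally have "norm (eig s M) \<le> 2 * odd_pow_sum (maxnorm s) M + norm (vac s)"
    unfolding eig_def by (meson add_right_mono norm_triangle_ineq order_trans)
  thus ?thesis using assms norm_ge_zero[of "vac s"] unfolding distrib_left by linarith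
qed

lemma norm_eigs:
  assumes "\<forall>s\<in>set ys. norm (vac s) \<le> D"
  shows "norm (eigs ys M) \<le> 2 ^ length ys * (\<Prod>s\<leftarrow>ys. odd_pow_sum (maxnorm s) M + D)"
  using assms
proof (induction ys)
  case (Cons s ys)
  have "0 \<le> D" using Cons.prems norm_ge_zero[of "vac s"] by (meson list.set_intros(1) order_trans)
  hence "0 \<le> 2 * (odd_pow_sum (maxnorm s) M + D)"
    using odd_pow_sum_nonneg[OF maxnorm_nonneg] by (simp add: add_nonneg_nonneg)
  hence "norm (eig s M) * norm (eigs ys M)
      \<le> (2 * (odd_pow_sum (maxnorm s) M + D)) * (2 ^ length ys * (\<Prod>s\<leftarrow>ys. odd_pow_sum (maxnorm s) M + D))"
    using Cons by (intro mult_mono norm_eig) auto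
  thus ?case by (simp add: eigs_def norm_mult algebra_simps)
qed (simp add: eigs_def)

section \<open>Convergence of the partition sums\<close>

lemma geometric_partial_sum_le:
  fixes a :: real assumes "0 \<le> a" "a < 1"
  shows "(\<Sum>j<n. a ^ j) \<le> 1 / (1 - a)"
proof -
  have "a * a ^ n \<le> a ^ n" using assms by (intro mult_left_le_one_le) auto
  thus ?thesis using assms by (simp add: sum_gp_strict field_simps)
qed

text \<open>A truncated Euler factor \<open>\<Sum>\<^sub>j\<^sub>\<le>\<^sub>K \<sigma>^(kj) \<le> 1/(1-\<sigma>^k)\<close>, bounded by an exponential
  so that products of such factors can be controlled by a sum.\<close>
lemma euler_factor_le:
  fixes \<sigma> :: real assumes "0 \<le> \<sigma>" "\<sigma> < 1" "1 \<le> k"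
  shows "(\<Sum>j\<le>K. (\<sigma> ^ k) ^ j) \<le> exp (\<sigma> ^ k / (1 - \<sigma>))"
proof -
  have a0: "0 \<le> \<sigma> ^ k" and a1: "\<sigma> ^ k \<le> \<sigma>"
    using assms power_decreasing[of 1 k \<sigma>] by auto
  have "(\<Sum>j\<le>K. (\<sigma> ^ k) ^ j) = (\<Sum>j<Suc K. (\<sigma> ^ k) ^ j)" by (simp add: lessThan_Suc_atMost)
  also have "\<dots> \<le> 1 / (1 - \<sigma> ^ k)" using a0 a1 assms by (intro geometric_partial_sum_le) auto
  also have "\<dots> = 1 + \<sigma> ^ k / (1 - \<sigma> ^ k)" using a1 assms by (simp add: field_simps)
  also have "\<dots> \<le> exp (\<sigma> ^ k / (1 - \<sigma> ^ k))" by (rule exp_ge_add_one_self)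
  also have "\<dots> \<le> exp (\<sigma> ^ k / (1 - \<sigma>))"
    using a0 a1 assms by (simp add: frac_le)
  finally show ?thesis .
qed

definition mset_of_mults :: "nat set \<Rightarrow> (nat \<Rightarrow> nat) \<Rightarrow> nat multiset" where
  "mset_of_mults A f = (\<Sum>k\<in>A. replicate_mset (f k) k)"

lemma sum_mset_of_mults: "sum_mset (mset_of_mults A f) = (\<Sum>k\<in>A. f k * k)"
  unfolding mset_of_mults_def by (induction A rule: infinite_finite_induct) auto

lemma pos_mset_as_mults:
  assumes "M \<in> pos_msets" "sum_mset M \<le> K"
  shows "M \<in> mset_of_mults {1..K} ` PiE {1..K} (\<lambda>_. {0..K})"
proof -
  have parts: "set_mset M \<subseteq> {1..K}"
  proof
    fix k assume "k \<in># M"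
    hence "k \<le> sum_mset M" "k \<noteq> 0" using assms(1)
      by (auto simp: pos_msets_def sum_mset.remove) (metis gr0I)
    thus "k \<in> {1..K}" using assms(2) by auto
  qed
  have "count M k \<le> K" for k
    using count_le_size[of M k] size_le_sum_mset[of M] assms by (auto simp: pos_msets_def)
  hence "restrict (count M) {1..K} \<in> PiE {1..K} (\<lambda>_. {0..K})" by auto
  moreover have "mset_of_mults {1..K} (restrict (count M) {1..K}) = M"
    using parts by (intro multiset_eqI) (auto simp: mset_of_mults_def count_sum count_eq_zero_iff)
  ultimately show ?thesis by (metis image_eqI)
qed

lemma partition_gf_summable:
  fixes \<sigma> :: real assumes s0: "0 \<le> \<sigma>" and s1: "\<sigma> < 1"
  shows "(\<lambda>M. \<sigma> ^ sum_mset M) summable_on pos_msets"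
proof (rule nonneg_bdd_above_summable_on)
  show "0 \<le> \<sigma> ^ sum_mset M" for M using s0 by simp
  let ?B = "exp (1 / (1 - \<sigma>) / (1 - \<sigma>))"
  have "(\<Sum>M\<in>S. \<sigma> ^ sum_mset M) \<le> ?B" if S: "S \<subseteq> pos_msets" "finite S" for S
  proof -
    define K where "K = (\<Sum>M\<in>S. sum_mset M)"
    define F where "F = PiE {1..K} (\<lambda>_. {0..K})"
    have finF: "finite F" by (simp add: F_def finite_PiE)
    have "S \<subseteq> mset_of_mults {1..K} ` F"
    proof
      fix M assume "M \<in> S"
      hence "sum_mset M \<le> K" unfolding K_def using S(2) by (intro member_le_sum) auto
      thus "M \<in> mset_of_mults {1..K} ` F"
        unfolding F_def using S \<open>M \<in> S\<close> pos_mset_as_mults[of M K] by blast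
    qed
    hence "(\<Sum>M\<in>S. \<sigma> ^ sum_mset M) \<le> (\<Sum>M\<in>mset_of_mults {1..K} ` F. \<sigma> ^ sum_mset M)"
      using finF s0 by (intro sum_mono2) auto
    also have "\<dots> \<le> (\<Sum>f\<in>F. \<sigma> ^ sum_mset (mset_of_mults {1..K} f))"
      using sum_image_le[of F "\<lambda>M. \<sigma> ^ sum_mset M" "mset_of_mults {1..K}"] finF s0
      by (simp add: comp_def)
    also have "\<dots> = (\<Sum>f\<in>F. \<Prod>k\<in>{1..K}. (\<sigma> ^ k) ^ f k)"
      by (simp add: sum_mset_of_mults power_sum power_mult[symmetric] mult.commute)
    also have "\<dots> = (\<Prod>k\<in>{1..K}. \<Sum>j\<le>K. (\<sigma> ^ k) ^ j)"
      unfolding F_def by (subst prod_sum_PiE) (auto simp: atLeast0AtMost)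
    also have "\<dots> \<le> (\<Prod>k\<in>{1..K}. exp (\<sigma> ^ k / (1 - \<sigma>)))"
      using s0 s1 by (intro prod_mono conjI euler_factor_le sum_nonneg) auto
    also have "\<dots> = exp ((\<Sum>k\<in>{1..K}. \<sigma> ^ k) / (1 - \<sigma>))"
      by (simp add: exp_sum sum_divide_distrib)
    also have "\<dots> \<le> ?B"
    proof -
      have "(\<Sum>k\<in>{1..K}. \<sigma> ^ k) \<le> (\<Sum>k<Suc K. \<sigma> ^ k)" using s0 by (intro sum_mono2) auto
      also have "\<dots> \<le> 1 / (1 - \<sigma>)" using s0 s1 by (rule geometric_partial_sum_le)
      finally have "(\<Sum>k\<in>{1..K}. \<sigma> ^ k) / (1 - \<sigma>) \<le> 1 / (1 - \<sigma>) / (1 - \<sigma>)"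
        using s1 by (intro divide_right_mono) auto
      thus ?thesis by simp
    qed
    finally show ?thesis .
  qed
  thus "bdd_above (sum (\<lambda>M. \<sigma> ^ sum_mset M) ` {S. S \<subseteq> pos_msets \<and> finite S})"
    by (intro bdd_aboveI[where M = ?B]) auto
qed

lemma prod_mset_nonneg:
  fixes f :: "nat \<Rightarrow> 'a::linordered_semidom"
  shows "(\<And>k. k \<in># M \<Longrightarrow> 0 \<le> f k) \<Longrightarrow> 0 \<le> (\<Prod>k\<in>#M. f k)"
  by (induction M) auto

lemma prod_mset_mono:
  fixes f g :: "nat \<Rightarrow> 'a::linordered_semidom"
  assumes "\<And>k. k \<in># M \<Longrightarrow> 0 \<le> f k \<and> f k \<le> g k"
  shows "(\<Prod>k\<in>#M. f k) \<le> (\<Prod>k\<in>#M. g k)"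
  using assms
proof (induction M)
  case (add k M)
  have "0 \<le> (\<Prod>k\<in>#M. f k)" using add.prems by (intro prod_mset_nonneg) auto
  moreover have "0 \<le> g k" using add.prems[of k] by auto
  ultimately show ?case using add by (auto intro!: mult_mono)
qed simp

lemma prod_list_mono:
  fixes f g :: "'b \<Rightarrow> 'a::linordered_semidom"
  assumes "\<And>x. x \<in> set xs \<Longrightarrow> 0 \<le> f x \<and> f x \<le> g x"
  shows "(\<Prod>x\<leftarrow>xs. f x) \<le> (\<Prod>x\<leftarrow>xs. g x)"
  using assms
proof (induction xs)
  case (Cons x xs)
  have "0 \<le> (\<Prod>x\<leftarrow>xs. f x)" using Cons.prems by (intro prod_list_nonneg) auto
  moreover have "0 \<le> g x" using Cons.prems[of x] by auto
  ultimately show ?case using Cons by (auto intro!: mult_mono)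
qed simp

lemma one_le_prod_list:
  fixes Rs :: "real list"
  shows "\<forall>R\<in>set Rs. 1 \<le> R \<Longrightarrow> 1 \<le> prod_list Rs"
proof (induction Rs)
  case (Cons R Rs)
  hence "1 * 1 \<le> R * prod_list Rs" by (intro mult_mono) auto
  thus ?case by simp
qed simp

lemma one_plus_sum_le_prod:
  fixes a :: "nat \<Rightarrow> real"
  assumes "\<And>k. 0 \<le> a k" "0 \<le> \<delta>"
  shows "1 + \<delta> * (\<Sum>k\<in>#M. a k) \<le> (\<Prod>k\<in>#M. 1 + \<delta> * a k)"
proof (induction M)
  case (add k M)
  have S0: "0 \<le> (\<Sum>k\<in>#M. a k)" using assms by (induction M) auto
  have "1 + \<delta> * (a k + (\<Sum>k\<in>#M. a k)) \<le> (1 + \<delta> * a k) * (1 + \<delta> * (\<Sum>k\<in>#M. a k))"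
    using assms S0 by (simp add: algebra_simps)
  also have "\<dots> \<le> (1 + \<delta> * a k) * (\<Prod>k\<in>#M. 1 + \<delta> * a k)"
    using add assms by (intro mult_left_mono) auto
  finally show ?case by simp
qed simp

text \<open>A sum of powers is dominated by a product: this turns the eigenvalues,
  which are sums over the parts, into multiplicative functions of the partition.\<close>
lemma odd_pow_sum_le_prod:
  fixes R D \<delta> :: real
  assumes R1: "1 \<le> R" and d0: "0 < \<delta>" and D0: "0 \<le> D"
  shows "odd_pow_sum R M + D \<le> (D + 1/\<delta>) * (\<Prod>k\<in>#M. (1+\<delta>) * R ^ (2*k - 1))"
proof -
  let ?P = "\<Prod>k\<in>#M. (1+\<delta>) * R ^ (2*k - 1)"
  have Rk: "1 \<le> R ^ (2*k - 1)" for k using R1 by simp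
  have "1 + \<delta> * odd_pow_sum R M \<le> (\<Prod>k\<in>#M. 1 + \<delta> * R ^ (2*k - 1))"
    unfolding odd_pow_sum_def using R1 d0 by (intro one_plus_sum_le_prod) auto
  also have "\<dots> \<le> ?P"
  proof (rule prod_mset_mono)
    fix k have "0 \<le> \<delta> * R ^ (2*k - 1)" using d0 Rk[of k] by simp
    thus "0 \<le> 1 + \<delta> * R ^ (2*k - 1) \<and> 1 + \<delta> * R ^ (2*k - 1) \<le> (1+\<delta>) * R ^ (2*k - 1)"
      using Rk[of k] by (simp add: algebra_simps)
  qed
  finally have h: "1 + \<delta> * odd_pow_sum R M \<le> ?P" .
  moreover have "0 \<le> \<delta> * odd_pow_sum R M"
    using R1 d0 odd_pow_sum_nonneg[of R M] by simp
  ultimately have P1: "1 \<le> ?P" and S: "odd_pow_sum R M \<le> ?P / \<delta>"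
    using d0 by (linarith, simp add: field_simps)
  have "D * 1 \<le> D * ?P" using mult_left_mono[OF P1 D0] .
  moreover have "(D + 1/\<delta>) * ?P = D * ?P + ?P / \<delta>" by (simp add: distrib_right)
  ultimately show ?thesis using S by linarith
qed

lemma prod_list_prod_mset:
  fixes c d :: real
  shows "(\<Prod>R\<leftarrow>Rs. c * (\<Prod>k\<in>#M. d * R ^ (2*k - 1)))
     = c ^ length Rs * (\<Prod>k\<in>#M. d ^ length Rs * prod_list Rs ^ (2*k - 1))"
proof (induction Rs)
  case Nil
  then show ?case by (induction M) auto
next
  case (Cons R Rs)
  have "(\<Prod>k\<in>#M. d * R ^ (2*k - 1)) * (\<Prod>k\<in>#M. d ^ length Rs * prod_list Rs ^ (2*k - 1))
      = (\<Prod>k\<in>#M. d ^ length (R # Rs) * prod_list (R # Rs) ^ (2*k - 1))"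
    by (simp add: prod_mset.distrib[symmetric] power_mult_distrib ac_simps)
  with Cons show ?case by (simp add: ac_simps)
qed

lemma weighted_prod_le_gf:
  fixes r D \<delta> :: real and Rs :: "real list"
  assumes r0: "0 \<le> r" and R1: "\<forall>R\<in>set Rs. 1 \<le> R" and rho: "r * prod_list Rs \<le> 1"
    and d0: "0 < \<delta>" and D0: "0 \<le> D" and M0: "0 \<notin># M"
  shows "r ^ (2 * sum_mset M - size M) * (\<Prod>R\<leftarrow>Rs. odd_pow_sum R M + D)
     \<le> (D + 1/\<delta>) ^ length Rs * ((1+\<delta>) ^ length Rs * (r * prod_list Rs)) ^ sum_mset M"
proof -
  define n where "n = length Rs"
  define \<rho> where "\<rho> = r * prod_list Rs"
  have rho0: "0 \<le> \<rho>" using r0 R1 one_le_prod_list[of Rs] by (simp add: \<rho>_def)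
  have C0: "0 \<le> (D + 1/\<delta>) ^ n" using d0 D0 by simp
  have "(\<Prod>R\<leftarrow>Rs. odd_pow_sum R M + D)
      \<le> (\<Prod>R\<leftarrow>Rs. (D + 1/\<delta>) * (\<Prod>k\<in>#M. (1+\<delta>) * R ^ (2*k - 1)))"
    using R1 d0 D0 odd_pow_sum_nonneg
    by (intro prod_list_mono conjI odd_pow_sum_le_prod add_nonneg_nonneg) auto
  also have "\<dots> = (D + 1/\<delta>) ^ n * (\<Prod>k\<in>#M. (1+\<delta>) ^ n * prod_list Rs ^ (2*k - 1))"
    unfolding n_def by (rule prod_list_prod_mset)
  finally have "(\<Prod>R\<leftarrow>Rs. odd_pow_sum R M + D)
      \<le> (D + 1/\<delta>) ^ n * (\<Prod>k\<in>#M. (1+\<delta>) ^ n * prod_list Rs ^ (2*k - 1))" .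
  moreover have "0 \<le> (\<Prod>k\<in>#M. r ^ (2*k - 1))" using r0 by (intro prod_mset_nonneg) simp
  ultimately have "r ^ (2 * sum_mset M - size M) * (\<Prod>R\<leftarrow>Rs. odd_pow_sum R M + D)
      \<le> (\<Prod>k\<in>#M. r ^ (2*k - 1)) * ((D + 1/\<delta>) ^ n * (\<Prod>k\<in>#M. (1+\<delta>) ^ n * prod_list Rs ^ (2*k - 1)))"
    unfolding prod_mset_odd_powers[OF M0] by (rule mult_left_mono)
  also have "\<dots> = (D + 1/\<delta>) ^ n * (\<Prod>k\<in>#M. (1+\<delta>) ^ n * \<rho> ^ (2*k - 1))"
    by (simp add: \<rho>_def prod_mset.distrib[symmetric] power_mult_distrib ac_simps)
  also have "\<dots> \<le> (D + 1/\<delta>) ^ n * (\<Prod>k\<in>#M. ((1+\<delta>) ^ n * \<rho>) ^ k)"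
  proof (intro mult_left_mono C0 prod_mset_mono conjI)
    fix k assume "k \<in># M"
    hence k1: "1 \<le> k" using M0 by (cases k) auto
    have "\<rho> ^ (2*k - 1) \<le> \<rho> ^ k" using rho0 rho k1 by (intro power_decreasing) (auto simp: \<rho>_def)
    moreover have "(1+\<delta>) ^ n \<le> ((1+\<delta>) ^ n) ^ k"
      using d0 k1 power_increasing[of 1 k "(1+\<delta>)^n"] by simp
    ultimately show "(1+\<delta>) ^ n * \<rho> ^ (2*k - 1) \<le> ((1+\<delta>) ^ n * \<rho>) ^ k"
      using rho0 d0 by (simp add: power_mult_distrib mult_mono)
    show "0 \<le> (1+\<delta>) ^ n * \<rho> ^ (2*k - 1)" using d0 rho0 by simp
  qed
  also have "\<dots> = (D + 1/\<delta>) ^ n * ((1+\<delta>) ^ n * \<rho>) ^ sum_mset M"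
    by (induction M) (auto simp: power_add)
  finally show ?thesis by (simp add: n_def \<rho>_def)
qed

lemma weighted_prod_summable:
  fixes r D :: real and Rs :: "real list"
  assumes r0: "0 \<le> r" and R1: "\<forall>R\<in>set Rs. 1 \<le> R" and rho: "r * prod_list Rs < 1" and D0: "0 \<le> D"
  shows "(\<lambda>M. r ^ (2 * sum_mset M - size M) * (\<Prod>R\<leftarrow>Rs. odd_pow_sum R M + D)) summable_on pos_msets"
proof -
  define n where "n = length Rs"
  define \<rho> where "\<rho> = r * prod_list Rs"
  have "((\<lambda>d. (1+d) ^ n * \<rho>) \<longlongrightarrow> (1+0) ^ n * \<rho>) (at_right 0)" by (intro tendsto_intros)
  hence "eventually (\<lambda>d. (1+d) ^ n * \<rho> < 1) (at_right (0::real))"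
    using rho by (intro order_tendstoD(2)) (auto simp: \<rho>_def)
  then obtain b where "0 < b" and b: "\<And>d. 0 < d \<Longrightarrow> d < b \<Longrightarrow> (1+d) ^ n * \<rho> < 1"
    unfolding eventually_at_right_field by auto
  define \<delta> where "\<delta> = b / 2"
  have d0: "0 < \<delta>" and s1: "(1+\<delta>) ^ n * \<rho> < 1" using \<open>0 < b\<close> b[of \<delta>] by (auto simp: \<delta>_def)
  have s0: "0 \<le> (1+\<delta>) ^ n * \<rho>"
    using d0 r0 R1 one_le_prod_list[of Rs] by (simp add: \<rho>_def)
  show ?thesis
  proof (rule summable_on_comparison_test)
    show "(\<lambda>M. (D + 1/\<delta>) ^ n * ((1+\<delta>) ^ n * \<rho>) ^ sum_mset M) summable_on pos_msets"
      using s0 s1 by (intro summable_on_cmult_right partition_gf_summable)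
    fix M assume "M \<in> pos_msets"
    hence M0: "0 \<notin># M" by (simp add: pos_msets_def)
    have "0 \<le> odd_pow_sum R M + D" if "R \<in> set Rs" for R
      using R1 that D0 odd_pow_sum_nonneg[of R M] by force
    thus "0 \<le> r ^ (2 * sum_mset M - size M) * (\<Prod>R\<leftarrow>Rs. odd_pow_sum R M + D)"
      using r0 by (intro mult_nonneg_nonneg prod_list_nonneg) auto
    show "r ^ (2 * sum_mset M - size M) * (\<Prod>R\<leftarrow>Rs. odd_pow_sum R M + D)
        \<le> (D + 1/\<delta>) ^ n * ((1+\<delta>) ^ n * \<rho>) ^ sum_mset M"
      using weighted_prod_le_gf[OF r0 R1 _ d0 D0 M0] rho by (simp add: n_def \<rho>_def)
  qed
qed

text \<open>The majorant needed for the series expansion of the first eigenvalue below: a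
  trace with the extra factors \<open>\<ell>(M) + 1\<close> and \<open>\<Sum>\<^sub>k\<^sub>\<in>\<^sub>M R^(2k-1)\<close> still converges.\<close>
lemma trace_majorant_summable:
  assumes x0: "x \<noteq> 0" and ys0: "\<forall>y\<in>set ys. y \<noteq> 0"
    and rho: "norm p * (maxnorm x * (\<Prod>y\<leftarrow>ys. maxnorm y)) < 1"
  shows "(\<lambda>M. norm (weight p M) * norm (eigs ys M) *
            (of_nat (size M) + 1 + odd_pow_sum (maxnorm x) M)) summable_on pos_msets"
proof -
  define D where "D = 1 + (\<Sum>y\<in>set ys. norm (vac y))"
  have D1: "1 \<le> D" by (simp add: D_def sum_nonneg)
  have Dy: "\<forall>y\<in>set ys. norm (vac y) \<le> D"
  proof
    fix y assume "y \<in> set ys"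
    hence "norm (vac y) \<le> (\<Sum>y\<in>set ys. norm (vac y))" by (intro member_le_sum) auto
    thus "norm (vac y) \<le> D" by (simp add: D_def)
  qed
  define X where "X M = (\<Prod>y\<leftarrow>ys. odd_pow_sum (maxnorm y) M + D)" for M
  have X0: "0 \<le> X M" for M
    unfolding X_def using D1 odd_pow_sum_nonneg[OF maxnorm_nonneg]
    by (intro prod_list_nonneg) (auto intro: add_nonneg_nonneg)
  have "(\<lambda>M. norm p ^ (2 * sum_mset M - size M) *
          (\<Prod>R\<leftarrow>maxnorm x # 1 # map maxnorm ys. odd_pow_sum R M + D)) summable_on pos_msets"
    using x0 ys0 rho D1 by (intro weighted_prod_summable) (auto intro: maxnorm_ge_1 simp: comp_def)
  hence "(\<lambda>M. 2 ^ length ys * (norm p ^ (2 * sum_mset M - size M) *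
          ((odd_pow_sum (maxnorm x) M + D) * ((of_nat (size M) + D) * X M)))) summable_on pos_msets"
    by (intro summable_on_cmult_right) (simp add: X_def odd_pow_sum_one comp_def)
  thus ?thesis
  proof (rule summable_on_comparison_test)
    fix M :: "nat multiset"
    let ?a = "odd_pow_sum (maxnorm x) M" and ?s = "of_nat (size M) :: real"
    have a0: "0 \<le> ?a" by (rule odd_pow_sum_nonneg[OF maxnorm_nonneg])
    have "?s + 1 + ?a \<le> (?a + D) * (?s + D)"
    proof -
      have "?a \<le> ?a * D" "?s \<le> ?s * D" "1 \<le> D * D" "0 \<le> ?a * ?s"
        using D1 a0 mult_left_mono[OF D1, of ?a] mult_left_mono[OF D1, of ?s] mult_mono[OF D1 D1]
        by auto
      moreover have "(?a + D) * (?s + D) = ?a * ?s + ?a * D + ?s * D + D * D"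
        by (simp add: algebra_simps)
      ultimately show ?thesis by linarith
    qed
    moreover have "norm (eigs ys M) \<le> 2 ^ length ys * X M"
      unfolding X_def by (rule norm_eigs[OF Dy])
    ultimately have "norm (eigs ys M) * (?s + 1 + ?a) \<le> (2 ^ length ys * X M) * ((?a + D) * (?s + D))"
      using a0 X0[of M] by (intro mult_mono) auto
    hence "norm (weight p M) * (norm (eigs ys M) * (?s + 1 + ?a))
        \<le> norm (weight p M) * ((2 ^ length ys * X M) * ((?a + D) * (?s + D)))"
      by (rule mult_left_mono) simp
    thus "norm (weight p M) * norm (eigs ys M) * (?s + 1 + ?a)
        \<le> 2 ^ length ys * (norm p ^ (2 * sum_mset M - size M) * ((?a + D) * ((?s + D) * X M)))"
      by (simp add: weight_def norm_power ac_simps)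
    show "0 \<le> norm (weight p M) * norm (eigs ys M) * (?s + 1 + ?a)" using a0 by simp
  qed
qed

section \<open>Expanding the first eigenvalue into a series\<close>

lemma odd_geometric_has_sum:
  fixes x :: "'a::{real_normed_field, banach}"
  assumes "norm x < 1"
  shows "((\<lambda>k. x ^ (2*k - 1)) has_sum x / (1 - x\<^sup>2)) {1..}"
proof -
  have x2: "norm (x\<^sup>2) < 1" using assms by (simp add: norm_power power_less_one_iff)
  have "summable (\<lambda>j. norm x * norm (x\<^sup>2) ^ j)"
    using x2 by (intro summable_mult summable_geometric) simp
  moreover have "(\<lambda>j. x * (x\<^sup>2) ^ j) sums (x * (1 / (1 - x\<^sup>2)))"
    by (intro sums_mult geometric_sums x2)
  ultimately have "((\<lambda>j. x * (x\<^sup>2) ^ j) has_sum (x / (1 - x\<^sup>2))) UNIV"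
    by (intro norm_summable_imp_has_sum) (simp_all add: norm_mult norm_power)
  hence "((\<lambda>k. x ^ (2*k - 1)) \<circ> Suc has_sum (x / (1 - x\<^sup>2))) UNIV"
    by (simp add: comp_def power_mult[symmetric] mult_2)
  moreover have "bij_betw Suc UNIV {1::nat..}"
    by (rule bij_betwI[where g = "\<lambda>n. n - 1"]) auto
  ultimately show ?thesis
    using has_sum_reindex_bij_betw[of Suc UNIV "{1..}" "\<lambda>k. x ^ (2*k - 1)"] by (simp add: comp_def)
qed

lemma vac_has_sum:
  assumes "x \<noteq> 0" "norm x < 1"
  shows "((\<lambda>k. x ^ (2*k - 1)) has_sum vac x) {1..}"
proof -
  have "vac x = x / (1 - x\<^sup>2)" using assms by (simp add: vac_def field_simps power2_eq_square)
  thus ?thesis using odd_geometric_has_sum[OF assms(2)] by simp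
qed

lemma sum_mset_as_count_sum:
  fixes f :: "'b \<Rightarrow> 'a::comm_semiring_1"
  shows "(\<Sum>k\<in>#M. f k) = (\<Sum>k\<in>set_mset M. of_nat (count M k) * f k)"
proof (induction M)
  case (add x M)
  have "(\<Sum>k\<in>set_mset (add_mset x M). of_nat (count (add_mset x M) k) * f k)
      = (\<Sum>k\<in>set_mset (add_mset x M). of_nat (count M k) * f k + (if k = x then f k else 0))"
    by (intro sum.cong) (auto simp: algebra_simps)
  also have "\<dots> = (\<Sum>k\<in>set_mset (add_mset x M). of_nat (count M k) * f k) + f x"
    by (simp add: sum.distrib sum.delta)
  also have "(\<Sum>k\<in>set_mset (add_mset x M). of_nat (count M k) * f k) = (\<Sum>k\<in>set_mset M. of_nat (count M k) * f k)"
    by (rule sum.mono_neutral_right) (auto simp: not_in_iff)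
  finally show ?case using add by (simp add: add.commute)
qed simp

lemma count_has_sum:
  fixes f :: "'b \<Rightarrow> 'a::{comm_semiring_1, topological_comm_monoid_add}"
  assumes "set_mset M \<subseteq> A"
  shows "((\<lambda>k. of_nat (count M k) * f k) has_sum (\<Sum>k\<in>#M. f k)) A"
proof -
  have "((\<lambda>k. of_nat (count M k) * f k) has_sum (\<Sum>k\<in>#M. f k)) (set_mset M)"
    by (simp add: sum_mset_as_count_sum)
  thus ?thesis
    by (subst (asm) has_sum_cong_neutral[where T = A]) (use assms in \<open>auto simp: not_in_iff\<close>)
qed

lemma eig_has_sum:
  assumes "x \<noteq> 0" "norm x < 1" "M \<in> pos_msets"
  shows "((\<lambda>k. of_nat (count M k + 1) * x ^ (2*k - 1) - of_nat (count M k) * inverse x ^ (2*k - 1))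
           has_sum eig x M) {1..}"
proof -
  have "set_mset M \<subseteq> {1..}" using assms(3) by (auto simp: pos_msets_def Suc_le_eq intro: gr0I)
  hence "((\<lambda>k. of_nat (count M k) * mode x k + x ^ (2*k - 1)) has_sum eig x M) {1..}"
    unfolding eig_def by (intro has_sum_add count_has_sum vac_has_sum assms)
  thus ?thesis by (simp add: mode_def algebra_simps)
qed

section \<open>The shifted expansion of the trace\<close>

lemma has_sum_diff:
  fixes f g :: "'b \<Rightarrow> 'a::{topological_semigroup_mult, ring_1, topological_ab_group_add}"
  assumes "(f has_sum a) A" "(g has_sum b) A"
  shows "((\<lambda>x. f x - g x) has_sum (a - b)) A"
  using has_sum_add[OF assms(1) has_sum_uminusI[OF assms(2)]] by simp

text \<open>Absolute convergence of a double series from a nonnegative majorant whose inner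
  sums are known (Tonelli's theorem combined with the comparison test).\<close>
lemma summable_on_Sigma_majorant:
  fixes a :: "'b \<times> 'c \<Rightarrow> complex" and b :: "'b \<times> 'c \<Rightarrow> real"
  assumes "\<And>M. M \<in> A \<Longrightarrow> ((\<lambda>k. b (M, k)) has_sum g M) B" and "g summable_on A"
    and "\<And>M k. M \<in> A \<Longrightarrow> k \<in> B \<Longrightarrow> 0 \<le> b (M, k) \<and> norm (a (M, k)) \<le> b (M, k)"
  shows "a summable_on A \<times> B"
proof -
  have "b summable_on A \<times> B" using assms by (intro summable_on_SigmaI) auto
  hence "(\<lambda>z. norm (a z)) summable_on A \<times> B"
    by (rule Infinite_Sum.abs_summable_on_comparison_test') (use assms(3) in auto)
  thus ?thesis by (rule Infinite_Sum.abs_summable_summable)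
qed

text \<open>Substituting the expansion of \<open>eig x M\<close> into the trace produces a double series
  over pairs \<open>(M, k)\<close> of a partition and a part size; it splits into the two pieces
  below.\<close>
definition plus_part :: "complex \<Rightarrow> complex \<Rightarrow> complex list \<Rightarrow> nat multiset \<times> nat \<Rightarrow> complex" where
  "plus_part p x ys = (\<lambda>(M, k). weight p M * eigs ys M * (of_nat (count M k + 1) * x ^ (2*k - 1)))"

definition minus_part :: "complex \<Rightarrow> complex \<Rightarrow> complex list \<Rightarrow> nat multiset \<times> nat \<Rightarrow> complex" where
  "minus_part p x ys = (\<lambda>(M, k). weight p M * eigs ys M * (of_nat (count M k) * inverse x ^ (2*k - 1)))"

context
  fixes p x :: complex and ys :: "complex list"
  assumes x1: "norm x < 1"
    and majorant: "(\<lambda>M. norm (weight p M) * norm (eigs ys M) *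
                     (of_nat (size M) + 1 + odd_pow_sum (maxnorm x) M)) summable_on pos_msets"
begin

lemma plus_part_summable: "plus_part p x ys summable_on pos_msets \<times> {1..}"
proof -
  define c where "c M = norm (weight p M) * norm (eigs ys M) * (of_nat (size M) + 1)" for M
  define gx where "gx = norm x / (1 - (norm x)\<^sup>2)"
  have "(norm x)\<^sup>2 < 1" using x1 by (simp add: abs_square_less_1)
  hence gx0: "0 \<le> gx" by (simp add: gx_def)
  show ?thesis
  proof (rule summable_on_Sigma_majorant[where b = "\<lambda>(M, k). c M * norm x ^ (2*k - 1)"])
    show "((\<lambda>k. (\<lambda>(M, k). c M * norm x ^ (2*k - 1)) (M, k)) has_sum c M * gx) {1..}" for M
      using has_sum_cmult_right[OF odd_geometric_has_sum[of "norm x"], of "c M"] x1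
      by (simp add: gx_def)
    show "(\<lambda>M. c M * gx) summable_on pos_msets"
    proof (rule summable_on_comparison_test)
      show "(\<lambda>M. norm (weight p M) * norm (eigs ys M) *
               (of_nat (size M) + 1 + odd_pow_sum (maxnorm x) M) * gx) summable_on pos_msets"
        using majorant by (rule summable_on_cmult_left)
      fix M
      have "c M \<le> norm (weight p M) * norm (eigs ys M) * (of_nat (size M) + 1 + odd_pow_sum (maxnorm x) M)"
        unfolding c_def using odd_pow_sum_nonneg[OF maxnorm_nonneg]
        by (intro mult_left_mono) (auto simp: add_increasing2)
      thus "c M * gx \<le> norm (weight p M) * norm (eigs ys M) *
               (of_nat (size M) + 1 + odd_pow_sum (maxnorm x) M) * gx"
        using gx0 by (rule mult_right_mono)
      show "0 \<le> c M * gx" using gx0 by (simp add: c_def)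
    qed
    fix M :: "nat multiset" and k :: nat
    have "norm (plus_part p x ys (M, k))
        = norm (weight p M) * norm (eigs ys M) * (of_nat (count M k + 1) * norm x ^ (2*k - 1))"
      by (simp add: plus_part_def norm_mult norm_power del: of_nat_Suc)
    also have "\<dots> \<le> norm (weight p M) * norm (eigs ys M) * ((of_nat (size M) + 1) * norm x ^ (2*k - 1))"
      by (intro mult_left_mono mult_right_mono) (simp_all add: count_le_size)
    finally show "0 \<le> (\<lambda>(M, k). c M * norm x ^ (2*k - 1)) (M, k) \<and>
          norm (plus_part p x ys (M, k)) \<le> (\<lambda>(M, k). c M * norm x ^ (2*k - 1)) (M, k)"
      by (simp add: c_def mult.assoc)
  qed
qed

lemma minus_part_summable: "minus_part p x ys summable_on pos_msets \<times> {1..}"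
proof -
  define c where "c M = norm (weight p M) * norm (eigs ys M)" for M
  show ?thesis
  proof (rule summable_on_Sigma_majorant[where b = "\<lambda>(M, k). c M * (of_nat (count M k) * maxnorm x ^ (2*k - 1))"])
    fix M assume "M \<in> pos_msets"
    hence "set_mset M \<subseteq> {1..}" by (auto simp: pos_msets_def Suc_le_eq intro: gr0I)
    thus "((\<lambda>k. (\<lambda>(M, k). c M * (of_nat (count M k) * maxnorm x ^ (2*k - 1))) (M, k))
            has_sum c M * odd_pow_sum (maxnorm x) M) {1..}"
      unfolding odd_pow_sum_def by (simp add: has_sum_cmult_right count_has_sum)
  next
    show "(\<lambda>M. c M * odd_pow_sum (maxnorm x) M) summable_on pos_msets"
    proof (rule summable_on_comparison_test[OF majorant])
      fix M
      show "c M * odd_pow_sum (maxnorm x) M \<le> norm (weight p M) * norm (eigs ys M) *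
               (of_nat (size M) + 1 + odd_pow_sum (maxnorm x) M)"
        unfolding c_def by (intro mult_left_mono) auto
      show "0 \<le> c M * odd_pow_sum (maxnorm x) M"
        by (simp add: c_def odd_pow_sum_nonneg maxnorm_nonneg)
    qed
  next
    fix M :: "nat multiset" and k :: nat
    have "norm (inverse x ^ (2*k - 1)) \<le> maxnorm x ^ (2*k - 1)"
      unfolding norm_power by (intro power_mono norm_inverse_le_maxnorm) auto
    thus "0 \<le> (\<lambda>(M, k). c M * (of_nat (count M k) * maxnorm x ^ (2*k - 1))) (M, k) \<and>
          norm (minus_part p x ys (M, k)) \<le> (\<lambda>(M, k). c M * (of_nat (count M k) * maxnorm x ^ (2*k - 1))) (M, k)"
      by (auto simp: c_def minus_part_def norm_mult maxnorm_nonneg mult_left_mono)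
  qed
qed

end

lemma trace_has_sum_parts:
  assumes x0: "x \<noteq> 0" and x1: "norm x < 1"
    and summable: "(\<lambda>z. plus_part p x ys z - minus_part p x ys z) summable_on pos_msets \<times> {1..}"
  shows "((\<lambda>z. plus_part p x ys z - minus_part p x ys z) has_sum tr p (x # ys)) (pos_msets \<times> {1..})"
proof -
  let ?a = "\<lambda>z. plus_part p x ys z - minus_part p x ys z"
  have S: "(?a has_sum infsum ?a (pos_msets \<times> {1..})) (pos_msets \<times> {1..})"
    using summable by (rule has_sum_infsum)
  have "((\<lambda>k. ?a (M, k)) has_sum weight p M * eigs (x # ys) M) {1..}" if "M \<in> pos_msets" for M
    using has_sum_cmult_right[OF eig_has_sum[OF x0 x1 that], of "weight p M * eigs ys M"]
    by (simp add: plus_part_def minus_part_def eigs_def algebra_simps)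
  hence "((\<lambda>M. weight p M * eigs (x # ys) M) has_sum infsum ?a (pos_msets \<times> {1..})) pos_msets"
    by (intro has_sum_SigmaD[OF S])
  hence "tr p (x # ys) = infsum ?a (pos_msets \<times> {1..})" unfolding tr_def by (rule infsumI)
  with S show ?thesis by simp
qed

text \<open>In the negative piece only pairs with \<open>k \<in> M\<close> contribute; writing \<open>M = N + {#k#}\<close>
  reindexes it over all pairs \<open>(N, k)\<close>.\<close>
lemma minus_part_shift:
  assumes "(minus_part p x ys has_sum S) (pos_msets \<times> {1..})"
  shows "((\<lambda>(N, k). minus_part p x ys (N + {#k#}, k)) has_sum S) (pos_msets \<times> {1..})"
proof -
  define Q where "Q = pos_msets \<times> {1::nat..}"
  define \<Phi> where "\<Phi> = (\<lambda>(N::nat multiset, k::nat). (N + {#k#}, k))"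
  have inj: "inj_on \<Phi> Q" unfolding \<Phi>_def by (rule inj_onI) auto
  have "minus_part p x ys z = 0" if "z \<in> Q - \<Phi> ` Q" for z
  proof -
    obtain M k where z: "z = (M, k)" by (cases z)
    have "k \<notin># M"
    proof
      assume "k \<in># M"
      hence "(M - {#k#}, k) \<in> Q" "\<Phi> (M - {#k#}, k) = z"
        using that z by (auto simp: Q_def pos_msets_def \<Phi>_def dest: in_diffD)
      thus False using that by blast
    qed
    thus ?thesis by (simp add: minus_part_def z not_in_iff)
  qed
  moreover have "\<Phi> ` Q \<subseteq> Q" unfolding \<Phi>_def Q_def pos_msets_def by auto
  ultimately have "(minus_part p x ys has_sum S) (\<Phi> ` Q)"
    using assms unfolding Q_def[symmetric] by (subst (asm) has_sum_cong_neutral[where T = "\<Phi> ` Q"]) auto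
  thus ?thesis unfolding Q_def[symmetric] by (subst (asm) has_sum_reindex[OF inj]) (simp add: \<Phi>_def comp_def case_prod_unfold)
qed

text \<open>The summand of the shifted expansion of the trace: after the shift, the
  contributions of \<open>t\<close> and of \<open>q\<^sup>-\<^sup>1 t\<^sup>-\<^sup>1\<close> (here \<open>x\<close> and \<open>p/x\<close>) appear side by side.\<close>
definition shift_term :: "complex \<Rightarrow> complex \<Rightarrow> complex list \<Rightarrow> nat multiset \<Rightarrow> nat \<Rightarrow> complex" where
  "shift_term p x ys N k = weight p N * of_nat (count N k + 1) *
     (x ^ (2*k - 1) * eigs ys N - p ^ (2*k - 1) * inverse x ^ (2*k - 1) * eigs ys (N + {#k#}))"

lemma trace_shifted_expansion:
  assumes x0: "x \<noteq> 0" and x1: "norm x < 1" and ys0: "\<forall>y\<in>set ys. y \<noteq> 0"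
    and rho: "norm p * (maxnorm x * (\<Prod>y\<leftarrow>ys. maxnorm y)) < 1"
  shows "((\<lambda>(N, k). shift_term p x ys N k) has_sum tr p (x # ys)) (pos_msets \<times> {1..})"
proof -
  note majorant = trace_majorant_summable[OF x0 ys0 rho]
  define A where "A = infsum (plus_part p x ys) (pos_msets \<times> {1..})"
  define B where "B = infsum (minus_part p x ys) (pos_msets \<times> {1..})"
  have plus: "(plus_part p x ys has_sum A) (pos_msets \<times> {1..})"
    unfolding A_def using plus_part_summable[OF x1 majorant] by (rule has_sum_infsum)
  have minus: "(minus_part p x ys has_sum B) (pos_msets \<times> {1..})"
    unfolding B_def using minus_part_summable[OF x1 majorant] by (rule has_sum_infsum)
  have "((\<lambda>z. plus_part p x ys z - minus_part p x ys z) has_sum A - B) (pos_msets \<times> {1..})"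
    using plus minus by (rule has_sum_diff)
  hence "tr p (x # ys) = A - B"
    using trace_has_sum_parts[OF x0 x1 has_sum_imp_summable] has_sum_unique by blast
  moreover have "((\<lambda>z. plus_part p x ys z - (\<lambda>(N, k). minus_part p x ys (N + {#k#}, k)) z)
      has_sum A - B) (pos_msets \<times> {1..})"
    using plus minus_part_shift[OF minus] by (rule has_sum_diff)
  moreover have "plus_part p x ys (N, k) - minus_part p x ys (N + {#k#}, k) = shift_term p x ys N k"
    if "(N, k) \<in> pos_msets \<times> {1..}" for N k
    using that weight_add_part[of N k p]
    by (simp add: plus_part_def minus_part_def shift_term_def pos_msets_def algebra_simps)
  ultimately show ?thesis
    by (subst has_sum_cong[where g = "\<lambda>z. plus_part p x ys z - (\<lambda>(N, k). minus_part p x ys (N + {#k#}, k)) z"])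
       (auto simp: case_prod_unfold)
qed

section \<open>The finite sign identity\<close>

abbreviation signed_prod :: "complex list \<Rightarrow> nat set \<Rightarrow> (nat \<Rightarrow> bool) \<Rightarrow> complex" where
  "signed_prod ss I e \<equiv> \<Prod>i\<in>I. if e i then ss ! i else inverse (ss ! i)"

abbreviation sign_coeff :: "'i set \<Rightarrow> ('i \<Rightarrow> bool) \<Rightarrow> 'a::ring_1" where
  "sign_coeff I e \<equiv> (-1) ^ (card I + card {i\<in>I. \<not> e i})"

lemma prod_signs:
  fixes a :: "'i \<Rightarrow> 'a::comm_ring_1"
  assumes "finite I"
  shows "(\<Prod>i\<in>I. if e i then a i else - a i) = (-1) ^ card {i\<in>I. \<not> e i} * (\<Prod>i\<in>I. a i)"
proof -
  have "(\<Prod>i\<in>I. if e i then a i else - a i) = (\<Prod>i\<in>I. (if e i then 1 else -1) * a i)"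
    by (rule prod.cong) auto
  also have "\<dots> = (\<Prod>i\<in>I. if e i then 1 else -1) * (\<Prod>i\<in>I. a i)"
    by (rule prod.distrib)
  also have "(\<Prod>i\<in>I. if e i then 1 else -1) = ((-1::'a) ^ card {i\<in>I. \<not> e i})"
    using assms by (simp add: prod.If_cases Collect_conj_eq Compl_eq Int_commute)
  finally show ?thesis .
qed

lemma signed_choice_sum:
  fixes h :: "'i \<Rightarrow> bool \<Rightarrow> 'a::comm_ring_1"
  assumes "finite I"
  shows "(\<Sum>e\<in>I \<rightarrow>\<^sub>E (UNIV::bool set). sign_coeff I e * (\<Prod>i\<in>I. h i (e i)))
       = (\<Prod>i\<in>I. h i False - h i True)"
proof -
  have "(\<Prod>i\<in>I. h i False - h i True) = (\<Prod>i\<in>I. \<Sum>b\<in>UNIV. if b then - h i True else h i False)"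
    by (simp add: UNIV_bool)
  also have "\<dots> = (\<Sum>e\<in>I \<rightarrow>\<^sub>E UNIV. \<Prod>i\<in>I. if e i then - h i True else h i False)"
    using assms by (rule prod_sum_PiE) simp
  also have "\<dots> = (\<Sum>e\<in>I \<rightarrow>\<^sub>E UNIV. sign_coeff I e * (\<Prod>i\<in>I. h i (e i)))"
  proof (rule sum.cong[OF refl])
    fix e
    have "(\<Prod>i\<in>I. if e i then - h i True else h i False) = (\<Prod>i\<in>I. - (if e i then h i (e i) else - h i (e i)))"
      by (rule prod.cong) auto
    also have "\<dots> = (-1) ^ card I * (-1) ^ card {i\<in>I. \<not> e i} * (\<Prod>i\<in>I. h i (e i))"
      using assms by (simp add: prod_signs prod_uminus)
    finally show "(\<Prod>i\<in>I. if e i then - h i True else h i False) = sign_coeff I e * (\<Prod>i\<in>I. h i (e i))"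
      by (simp add: power_add)
  qed
  finally show ?thesis ..
qed

lemma signed_subset_sum:
  fixes h :: "'i \<Rightarrow> bool \<Rightarrow> 'a::comm_ring_1"
  assumes "finite A"
  shows "(\<Sum>I\<in>Pow A. \<Sum>e\<in>I \<rightarrow>\<^sub>E (UNIV::bool set). sign_coeff I e * ((\<Prod>i\<in>I. h i (e i)) * (\<Prod>j\<in>A - I. c j)))
       = (\<Prod>j\<in>A. h j False - h j True + c j)"
proof -
  have "(\<Sum>e\<in>I \<rightarrow>\<^sub>E (UNIV::bool set). sign_coeff I e * ((\<Prod>i\<in>I. h i (e i)) * (\<Prod>j\<in>A - I. c j)))
      = (\<Prod>i\<in>I. h i False - h i True) * (\<Prod>j\<in>A - I. c j)" if "I \<in> Pow A" for I
    using that assms finite_subset[of I A]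
    by (simp add: signed_choice_sum sum_distrib_right[symmetric] mult.assoc[symmetric])
  hence "(\<Sum>I\<in>Pow A. \<Sum>e\<in>I \<rightarrow>\<^sub>E (UNIV::bool set). sign_coeff I e * ((\<Prod>i\<in>I. h i (e i)) * (\<Prod>j\<in>A - I. c j)))
      = (\<Sum>I\<in>Pow A. (\<Prod>i\<in>I. h i False - h i True) * (\<Prod>j\<in>A - I. c j))"
    by (rule sum.cong[OF refl])
  also have "\<dots> = (\<Prod>j\<in>A. h j False - h j True + c j)"
    by (rule prod_add[OF assms, symmetric])
  finally show ?thesis .
qed

lemma eigs_filter:
  "eigs (map (nth ss) (filter (\<lambda>j. j \<notin> I) [1..<n])) M = (\<Prod>j\<in>{1..<n} - I. eig (ss ! j) M)"
proof -
  have "eigs (map (nth ss) (filter (\<lambda>j. j \<notin> I) [1..<n])) M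
      = (\<Prod>j\<leftarrow>filter (\<lambda>j. j \<notin> I) [1..<n]. eig (ss ! j) M)"
    by (simp add: eigs_def comp_def)
  also have "\<dots> = (\<Prod>j\<in>set (filter (\<lambda>j. j \<notin> I) [1..<n]). eig (ss ! j) M)"
    by (rule prod.distinct_set_conv_list[symmetric]) simp
  finally show ?thesis by (simp add: set_diff_eq)
qed

lemma tl_as_map_nth: "ss \<noteq> [] \<Longrightarrow> tl ss = map (nth ss) (filter (\<lambda>j. j \<notin> {}) [1..<length ss])"
  by (cases ss) (simp_all add: map_Suc_upt[symmetric] comp_def map_nth del: upt_Suc)

text \<open>The argument of the right-hand traces enters inverted,
  since \<open>|t\<^sub>1 t\<^sub>i\<^sub>1^(\<epsilon>) \<cdots>|\<^sup>-\<^sup>1 < 1\<close> is the regime in which the expansion applies.\<close>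
lemma shift_term_sign_identity:
  assumes ne: "ss \<noteq> []" and p0: "p \<noteq> 0"
  shows "(\<Sum>I\<in>Pow {1..<length ss}. \<Sum>e\<in>I \<rightarrow>\<^sub>E (UNIV::bool set).
      - sign_coeff I e * shift_term p (inverse (hd ss * signed_prod ss I e))
           (map (nth ss) (filter (\<lambda>j. j \<notin> I) [1..<length ss])) N k)
    = shift_term p (p * hd ss) (tl ss) N k"
proof -
  define s where "s = hd ss"
  define A where "A = {1..<length ss}"
  define m where "m = 2*k - 1"
  define c where "c = weight p N * of_nat (count N k + 1)"
  define h\<^sub>1 where "h\<^sub>1 i b = (if b then ss ! i else inverse (ss ! i)) ^ m" for i b
  define h\<^sub>2 where "h\<^sub>2 i b = inverse (if b then ss ! i else inverse (ss ! i)) ^ m" for i b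
  have finA: "finite A" by (simp add: A_def)
  have "- sign_coeff I e * shift_term p (inverse (s * signed_prod ss I e))
           (map (nth ss) (filter (\<lambda>j. j \<notin> I) [1..<length ss])) N k
     = c * p ^ m * s ^ m * (sign_coeff I e * ((\<Prod>i\<in>I. h\<^sub>1 i (e i)) * (\<Prod>j\<in>A - I. eig (ss ! j) N + mode (ss ! j) k)))
       - c * inverse s ^ m * (sign_coeff I e * ((\<Prod>i\<in>I. h\<^sub>2 i (e i)) * (\<Prod>j\<in>A - I. eig (ss ! j) N)))" for I e
    unfolding shift_term_def eigs_filter eig_add_part h\<^sub>1_def h\<^sub>2_def c_def m_def A_def
    by (simp add: power_mult_distrib prod_power_distrib inverse_mult_distrib
                  prod_inversef[symmetric] comp_def algebra_simps)
  hence "(\<Sum>I\<in>Pow A. \<Sum>e\<in>I \<rightarrow>\<^sub>E (UNIV::bool set).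
      - sign_coeff I e * shift_term p (inverse (s * signed_prod ss I e))
           (map (nth ss) (filter (\<lambda>j. j \<notin> I) [1..<length ss])) N k)
    = c * p ^ m * s ^ m * (\<Sum>I\<in>Pow A. \<Sum>e\<in>I \<rightarrow>\<^sub>E (UNIV::bool set).
          sign_coeff I e * ((\<Prod>i\<in>I. h\<^sub>1 i (e i)) * (\<Prod>j\<in>A - I. eig (ss ! j) N + mode (ss ! j) k)))
      - c * inverse s ^ m * (\<Sum>I\<in>Pow A. \<Sum>e\<in>I \<rightarrow>\<^sub>E (UNIV::bool set).
          sign_coeff I e * ((\<Prod>i\<in>I. h\<^sub>2 i (e i)) * (\<Prod>j\<in>A - I. eig (ss ! j) N)))"
    by (simp add: sum_subtractf sum_distrib_left)
  also have "\<dots> = c * p ^ m * s ^ m * (\<Prod>j\<in>A. h\<^sub>1 j False - h\<^sub>1 j True + (eig (ss ! j) N + mode (ss ! j) k))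
      - c * inverse s ^ m * (\<Prod>j\<in>A. h\<^sub>2 j False - h\<^sub>2 j True + eig (ss ! j) N)"
    by (simp only: signed_subset_sum[OF finA])
  also have "\<dots> = c * p ^ m * s ^ m * (\<Prod>j\<in>A. eig (ss ! j) N)
      - c * inverse s ^ m * (\<Prod>j\<in>A. eig (ss ! j) N + mode (ss ! j) k)"
    by (simp add: h\<^sub>1_def h\<^sub>2_def mode_def m_def add.commute)
  also have "\<dots> = shift_term p (p * s) (tl ss) N k"
  proof -
    have cancel: "p ^ m * inverse (p * s) ^ m = inverse s ^ m"
      using p0 by (simp add: inverse_mult_distrib power_mult_distrib power_inverse)
    show ?thesis
      unfolding shift_term_def tl_as_map_nth[OF ne] eigs_filter eig_add_part m_def[symmetric] cancel
      by (simp add: c_def A_def power_mult_distrib algebra_simps)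
  qed
  finally show ?thesis by (simp add: s_def A_def)
qed

lemma conv_domain_p_nonzero: "conv_domain p xs \<Longrightarrow> p \<noteq> 0"
  by (simp add: conv_domain_def)

lemma conv_domain_nonzero: "conv_domain p xs \<Longrightarrow> z \<in> set xs \<Longrightarrow> z \<noteq> 0"
  by (auto simp: conv_domain_def)

lemma conv_domain_subset_prod:
  "conv_domain p xs \<Longrightarrow> K \<subseteq> {..<length xs} \<Longrightarrow>
     norm (p * (\<Prod>k\<in>K. if e k then xs ! k else inverse (xs ! k))) < 1"
  by (simp add: conv_domain_def)

lemma norm_larger_choice: "norm (if 1 \<le> norm z then z else inverse z) = maxnorm z"
proof (cases "1 \<le> norm z")
  case True
  hence "inverse (norm z) \<le> norm z" using inverse_le_1_iff[of "norm z"] by linarith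
  thus ?thesis using True by (simp add: maxnorm_def max_def)
next
  case False
  hence "norm z \<le> inverse (norm z)" by (cases "z = 0") (auto simp: one_le_inverse order.trans[of _ 1])
  thus ?thesis using False by (simp add: maxnorm_def max_def norm_inverse)
qed

text \<open>Choosing for every argument the sign that maximises its modulus.\<close>
lemma conv_domain_maxnorm:
  assumes "conv_domain p xs"
  shows "norm p * (\<Prod>x\<leftarrow>xs. maxnorm x) < 1"
proof -
  define e where "e k = (1 \<le> norm (xs ! k))" for k
  have "norm (if e k then xs ! k else inverse (xs ! k)) = maxnorm (xs ! k)" for k
    unfolding e_def by (rule norm_larger_choice)
  hence "norm (p * (\<Prod>k\<in>{..<length xs}. if e k then xs ! k else inverse (xs ! k)))
      = norm p * (\<Prod>k\<in>{..<length xs}. maxnorm (xs ! k))"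
    by (simp add: norm_mult prod_norm[symmetric])
  also have "(\<Prod>k\<in>{..<length xs}. maxnorm (xs ! k)) = (\<Prod>x\<leftarrow>xs. maxnorm x)"
    by (simp add: prod.list_conv_set_nth atLeast0LessThan)
  finally show ?thesis using conv_domain_subset_prod[OF assms, of "{..<length xs}" e] by simp
qed

lemma conv_domain_single: "conv_domain p xs \<Longrightarrow> k < length xs \<Longrightarrow> norm (p * xs ! k) < 1"
  using conv_domain_subset_prod[of p xs "{k}" "\<lambda>_. True"] by simp

text \<open>Applied to the left-hand side, the hypothesis \<open>|q \<cdot> (q t\<^sub>1)\<^sup>-\<^sup>1 \<cdots>| < 1\<close> shows that
  the first argument of every right-hand trace has modulus \<open>> 1\<close>.\<close>
lemma conv_domain_first_inverse:
  assumes ne: "ss \<noteq> []" and cd: "conv_domain p ((p * hd ss) # tl ss)" and I: "I \<subseteq> {1..<length ss}"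
  shows "norm (inverse (hd ss * signed_prod ss I e)) < 1"
proof -
  define L where "L = (p * hd ss) # tl ss"
  define e' where "e' k = (k \<noteq> 0 \<and> \<not> e k)" for k
  have p0: "p \<noteq> 0" using cd by (rule conv_domain_p_nonzero)
  have I0: "0 \<notin> I" and fI: "finite I" using I by (auto intro: finite_subset)
  have L_nth: "L ! i = ss ! i" if "i \<in> I" for i
    using that I0 ne by (cases i; cases ss) (auto simp: L_def)
  have "(\<Prod>k\<in>I. if e' k then L ! k else inverse (L ! k)) = (\<Prod>i\<in>I. inverse (if e i then ss ! i else inverse (ss ! i)))"
    using I0 by (intro prod.cong) (auto simp: e'_def L_nth)
  also have "\<dots> = inverse (signed_prod ss I e)"
    by (simp add: prod_inversef[symmetric] comp_def)
  finally have "p * (\<Prod>k\<in>insert 0 I. if e' k then L ! k else inverse (L ! k))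
      = inverse (hd ss * signed_prod ss I e)"
    using fI I0 p0 by (simp add: e'_def L_def inverse_mult_distrib)
  moreover have "insert 0 I \<subseteq> {..<length L}" using I ne by (auto simp: L_def)
  ultimately show ?thesis using conv_domain_subset_prod[of p L "insert 0 I" e'] cd
    by (simp add: L_def)
qed

section \<open>The functional equation\<close>

lemma has_sum_sum_fun:
  fixes f :: "'i \<Rightarrow> 'b \<Rightarrow> 'a::topological_comm_monoid_add"
  assumes "finite I" "\<And>i. i \<in> I \<Longrightarrow> (f i has_sum s i) A"
  shows "((\<lambda>x. \<Sum>i\<in>I. f i x) has_sum (\<Sum>i\<in>I. s i)) A"
  using assms by (induction I rule: finite_induct) (auto intro: has_sum_add)

text \<open>The left-hand side: \<open>|q t\<^sub>1| < 1\<close> because the right-hand term with \<open>s = 0\<close> is the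
  trace at \<open>(t\<^sub>1, \<dots>, t\<^sub>n)\<close>.\<close>
lemma lhs_shifted_expansion:
  assumes ne: "ss \<noteq> []" and cdL: "conv_domain p ((p * hd ss) # tl ss)" and cd: "conv_domain p ss"
  shows "((\<lambda>(N, k). shift_term p (p * hd ss) (tl ss) N k) has_sum trace_C p ((p * hd ss) # tl ss))
           (pos_msets \<times> {1..})"
  unfolding trace_C_eq_tr
proof (rule trace_shifted_expansion)
  show "p * hd ss \<noteq> 0" using conv_domain_nonzero[OF cdL, of "p * hd ss"] by simp
  show "\<forall>y\<in>set (tl ss). y \<noteq> 0" using conv_domain_nonzero[OF cdL] by auto
  show "norm (p * hd ss) < 1"
    using conv_domain_single[OF cd, of 0] ne by (simp add: hd_conv_nth)
  show "norm p * (maxnorm (p * hd ss) * (\<Prod>y\<leftarrow>tl ss. maxnorm y)) < 1"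
    using conv_domain_maxnorm[OF cdL] by simp
qed

text \<open>A right-hand term: by the oddness of \<open>C\<close> its trace is minus the trace with the
  first argument inverted, and the inverted argument lies in the unit disc.\<close>
lemma rhs_shifted_expansion:
  assumes ne: "ss \<noteq> []" and cdL: "conv_domain p ((p * hd ss) # tl ss)"
    and I: "I \<subseteq> {1..<length ss}" and cdR: "conv_domain p (rhs_args ss I e)"
  shows "((\<lambda>(N, k). - sign_coeff I e * shift_term p (inverse (hd ss * signed_prod ss I e))
              (map (nth ss) (filter (\<lambda>j. j \<notin> I) [1..<length ss])) N k)
          has_sum sign_coeff I e * trace_C p (rhs_args ss I e)) (pos_msets \<times> {1..})"
proof -
  define u where "u = hd ss * signed_prod ss I e"
  define rest where "rest = map (nth ss) (filter (\<lambda>j. j \<notin> I) [1..<length ss])"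
  have args: "rhs_args ss I e = u # rest" by (simp add: rhs_args_def u_def rest_def)
  have "((\<lambda>(N, k). shift_term p (inverse u) rest N k) has_sum tr p (inverse u # rest)) (pos_msets \<times> {1..})"
  proof (rule trace_shifted_expansion)
    show "inverse u \<noteq> 0" "\<forall>y\<in>set rest. y \<noteq> 0"
      using conv_domain_nonzero[OF cdR] by (auto simp: args)
    show "norm (inverse u) < 1" unfolding u_def using ne cdL I by (rule conv_domain_first_inverse)
    show "norm p * (maxnorm (inverse u) * (\<Prod>y\<leftarrow>rest. maxnorm y)) < 1"
      using conv_domain_maxnorm[OF cdR] by (simp add: args maxnorm_inverse)
  qed
  moreover have "tr p (inverse u # rest) = - trace_C p (rhs_args ss I e)"
    by (simp add: trace_C_eq_tr args tr_def eigs_inverse_hd infsum_uminus)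
  ultimately show ?thesis
    using has_sum_cmult_right[of _ _ _ "- sign_coeff I e"] by (fastforce simp: u_def rest_def case_prod_unfold)
qed

theorem theorem3p3:
  fixes p :: complex and ss :: "complex list"
  assumes "ss \<noteq> []"
    and "conv_domain p ((p * hd ss) # tl ss)"
    and "\<forall>I \<subseteq> {1..<length ss}. \<forall>e. conv_domain p (rhs_args ss I e)"
  shows "trace_C p ((p * hd ss) # tl ss) =
    (\<Sum>I\<in>Pow {1..<length ss}. \<Sum>e\<in>I \<rightarrow>\<^sub>E (UNIV :: bool set).
       (-1) ^ (card I + card {i\<in>I. \<not> e i}) * trace_C p (rhs_args ss I e))"
proof -
  note ne = assms(1) and cdL = assms(2) and cdR = assms(3)
  have "rhs_args ss {} e = ss" for e
    using ne by (cases ss) (simp_all add: rhs_args_def map_Suc_upt[symmetric] comp_def map_nth del: upt_Suc)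
  hence cd: "conv_domain p ss" using cdR by (metis empty_subsetI)
  have "((\<lambda>z. \<Sum>I\<in>Pow {1..<length ss}. \<Sum>e\<in>I \<rightarrow>\<^sub>E (UNIV :: bool set).
            (\<lambda>(N, k). - sign_coeff I e * shift_term p (inverse (hd ss * signed_prod ss I e))
              (map (nth ss) (filter (\<lambda>j. j \<notin> I) [1..<length ss])) N k) z)
        has_sum (\<Sum>I\<in>Pow {1..<length ss}. \<Sum>e\<in>I \<rightarrow>\<^sub>E (UNIV :: bool set).
            sign_coeff I e * trace_C p (rhs_args ss I e))) (pos_msets \<times> {1..})"
    using ne cdL cdR
    by (intro has_sum_sum_fun rhs_shifted_expansion) (auto intro!: finite_PiE dest: finite_subset[OF _ finite_atLeastLessThan])
  moreover have "((\<lambda>(N, k). shift_term p (p * hd ss) (tl ss) N k) has_sum trace_C p ((p * hd ss) # tl ss))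
                   (pos_msets \<times> {1..})"
    using ne cdL cd by (rule lhs_shifted_expansion)
  ultimately show ?thesis
    using shift_term_sign_identity[OF ne conv_domain_p_nonzero[OF cdL]]
    by (simp add: case_prod_unfold has_sum_unique)
qed
end
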